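(* Let $P(x)=a_0(x^2-a_1^2)\cdots(x^2-a_n^2)$ with $a_0\ne0$ and $0<a_1\le\cdots\le a_n$. Then $P(x)/x^j$ for $j=0,\ldots,2n$; $P^{(1)}(x)/x^j$ for $j=0,\ldots,2n-2$; and $P^{(2)}(x)/x^j$ for $j=0,\ldots,2n-4$ are strictly monotonically increasing for $x>a_n$ when $a_0>0$, and strictly monotonically decreasing for $x>a_n$ when $a_0<0$.
   Context: $P^{(l)}$ denotes the $l$-th derivative of $P$. *)

theory Defs
  imports "HOL-Computational_Algebra.Polynomial"
begin

definition evenP :: "real \<Rightarrow> (nat \<Rightarrow> real) \<Rightarrow> nat \<Rightarrow> real poly" where
  "evenP a0 a n = smult a0 (\<Prod>i\<in>{1..n}. [: - ((a i)^2), 0, 1 :])"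

end

theory Submission
  imports Defs
begin

text \<open>Each factor \<open>x\<^sup>2 - a\<^sub>i\<^sup>2\<close> is positive for \<open>x > a\<^sub>n\<close>, and its quotient by
  \<open>x\<^sup>2\<close>, namely \<open>1 - a\<^sub>i\<^sup>2/x\<^sup>2\<close>, is strictly increasing there. The functions \<open>f\<close> that are
  positive on \<open>(A, \<infinity>)\<close> with \<open>f x / x\<^sup>d\<close> nondecreasing are closed under products (the
  exponents add), sums and positive multiples, so by the Leibniz rule \<open>P\<close>, \<open>P'\<close> and \<open>P''\<close>
  have this property with exponents \<open>2n\<close> (even strictly), \<open>2n - 1\<close> and \<open>2n - 2\<close>.
  Dividing by a lower power \<open>x\<^sup>j\<close> instead multiplies the quotient by the increasing
  factor \<open>x\<^bsup>d-j\<^esup>\<close>, which makes it strictly increasing.\<close>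

lemma mono_on_mult_nonneg:
  fixes u v :: "'a::order \<Rightarrow> 'b::linordered_semiring_strict"
  assumes "mono_on S u" "mono_on S v"
    and "\<And>x. x \<in> S \<Longrightarrow> 0 \<le> u x" "\<And>x. x \<in> S \<Longrightarrow> 0 \<le> v x"
  shows "mono_on S (\<lambda>x. u x * v x)"
  using assms by (intro mono_onI mult_mono) (auto dest: mono_onD)

lemma strict_mono_on_mult_nonneg:
  fixes u v :: "'a::order \<Rightarrow> 'b::linordered_semiring_strict"
  assumes "strict_mono_on S u" "mono_on S v"
    and "\<And>x. x \<in> S \<Longrightarrow> 0 \<le> u x" "\<And>x. x \<in> S \<Longrightarrow> 0 < v x"
  shows "strict_mono_on S (\<lambda>x. u x * v x)"
  using assms by (intro strict_mono_onI mult_less_le_imp_less) (auto dest: mono_onD strict_mono_onD)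

definition pos_mono_ratio :: "real \<Rightarrow> nat \<Rightarrow> (real \<Rightarrow> real) \<Rightarrow> bool" where
  "pos_mono_ratio A d f \<longleftrightarrow> (\<forall>x>A. 0 < f x) \<and> mono_on {A<..} (\<lambda>x. f x / x ^ d)"

definition pos_strict_mono_ratio :: "real \<Rightarrow> nat \<Rightarrow> (real \<Rightarrow> real) \<Rightarrow> bool" where
  "pos_strict_mono_ratio A d f \<longleftrightarrow> (\<forall>x>A. 0 < f x) \<and> strict_mono_on {A<..} (\<lambda>x. f x / x ^ d)"

lemma pos_mono_ratioD:
  assumes "pos_mono_ratio A d f" "A < x" "x \<le> y"
  shows "0 < f x" "f x / x ^ d \<le> f y / y ^ d"
  using assms unfolding pos_mono_ratio_def by (auto intro: mono_onD)

lemma pos_strict_mono_ratioD: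
  assumes "pos_strict_mono_ratio A d f" "A < x" "x < y"
  shows "0 < f x" "f x / x ^ d < f y / y ^ d"
  using assms unfolding pos_strict_mono_ratio_def by (auto intro: strict_mono_onD)

lemma pos_strict_mono_ratio_imp_pos_mono_ratio:
  "pos_strict_mono_ratio A d f \<Longrightarrow> pos_mono_ratio A d f"
  unfolding pos_strict_mono_ratio_def pos_mono_ratio_def by (simp add: strict_mono_on_imp_mono_on)

lemma pos_mono_ratio_mult:
  assumes "0 \<le> A" "pos_mono_ratio A d f" "pos_mono_ratio A e g"
  shows "pos_mono_ratio A (d + e) (\<lambda>x. f x * g x)"
proof -
  have "mono_on {A<..} (\<lambda>x. (f x / x ^ d) * (g x / x ^ e))"
    using assms unfolding pos_mono_ratio_def by (intro mono_on_mult_nonneg) auto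
  then show ?thesis
    using assms by (simp add: pos_mono_ratio_def power_add times_divide_times_eq)
qed

lemma pos_strict_mono_ratio_mult:
  assumes "0 \<le> A" "pos_strict_mono_ratio A d f" "pos_mono_ratio A e g"
  shows "pos_strict_mono_ratio A (d + e) (\<lambda>x. f x * g x)"
proof -
  have "strict_mono_on {A<..} (\<lambda>x. (f x / x ^ d) * (g x / x ^ e))"
    using assms unfolding pos_strict_mono_ratio_def pos_mono_ratio_def
    by (intro strict_mono_on_mult_nonneg) auto
  then show ?thesis
    using assms unfolding pos_strict_mono_ratio_def pos_mono_ratio_def
    by (simp add: power_add times_divide_times_eq)
qed

lemma pos_mono_ratio_add:
  assumes "pos_mono_ratio A d f" "pos_mono_ratio A d g"
  shows "pos_mono_ratio A d (\<lambda>x. f x + g x)"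
  using assms unfolding pos_mono_ratio_def add_divide_distrib
  by (auto intro!: mono_onI add_mono add_pos_pos dest: mono_onD)

lemma pos_mono_ratio_cmult:
  assumes "pos_mono_ratio A d f" "0 < c"
  shows "pos_mono_ratio A d (\<lambda>x. c * f x)"
proof -
  have "mono_on {A<..} (\<lambda>x. c * (f x / x ^ d))"
    using assms by (intro mono_onI mult_left_mono) (auto dest: pos_mono_ratioD)
  then show ?thesis
    using assms by (simp add: pos_mono_ratio_def)
qed

lemma pos_strict_mono_ratio_even_factor:
  assumes "0 < b" "b \<le> A"
  shows "pos_strict_mono_ratio A 2 (poly [:- (b\<^sup>2), 0, 1:])"
  unfolding pos_strict_mono_ratio_def
proof (intro conjI allI impI strict_mono_onI)
  fix x :: real
  assume "A < x"
  then have "b\<^sup>2 < x\<^sup>2" using assms by (intro power_strict_mono) auto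
  then show "0 < poly [:- (b\<^sup>2), 0, 1:] x" by (simp add: power2_eq_square)
next
  have quot: "poly [:- (b\<^sup>2), 0, 1:] x / x\<^sup>2 = 1 - b\<^sup>2 / x\<^sup>2" if "0 < x" for x :: real
    using that by (simp add: power2_eq_square field_simps)
  fix x y :: real
  assume "x \<in> {A<..}" "y \<in> {A<..}" "x < y"
  with assms have "0 < x" "0 < y" "x\<^sup>2 < y\<^sup>2" by (auto intro: power_strict_mono)
  then have "b\<^sup>2 / y\<^sup>2 < b\<^sup>2 / x\<^sup>2" using assms by (intro divide_strict_left_mono) auto
  then show "poly [:- (b\<^sup>2), 0, 1:] x / x\<^sup>2 < poly [:- (b\<^sup>2), 0, 1:] y / y\<^sup>2"
    using quot \<open>0 < x\<close> \<open>x < y\<close> by simp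
qed

lemma ratio_lower_power_eq:
  fixes x :: real
  assumes "0 < x" "j \<le> d"
  shows "f / x ^ j = (f / x ^ d) * x ^ (d - j)"
  using assms by (simp add: power_diff)

lemma pos_mono_ratio_lower_power:
  assumes "0 \<le> A" "pos_mono_ratio A d f" "j < d"
  shows "strict_mono_on {A<..} (\<lambda>x. f x / x ^ j)"
proof (rule strict_mono_onI)
  fix x y :: real
  assume "x \<in> {A<..}" "y \<in> {A<..}" "x < y"
  with assms have "0 < x"
    and *: "0 < f x / x ^ d" "f x / x ^ d \<le> f y / y ^ d" "x ^ (d - j) < y ^ (d - j)"
    by (auto dest: pos_mono_ratioD[OF _ _ less_imp_le] intro: power_strict_mono)
  have "f x / x ^ j = (f x / x ^ d) * x ^ (d - j)"
    using \<open>0 < x\<close> assms(3) by (intro ratio_lower_power_eq) auto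
  also have "\<dots> < (f y / y ^ d) * y ^ (d - j)"
    using * \<open>0 < x\<close> by (intro mult_le_less_imp_less) auto
  also have "\<dots> = f y / y ^ j"
    using \<open>0 < x\<close> \<open>x < y\<close> assms(3) by (intro ratio_lower_power_eq[symmetric]) auto
  finally show "f x / x ^ j < f y / y ^ j" .
qed

lemma pos_strict_mono_ratio_lower_power:
  assumes "0 \<le> A" "pos_strict_mono_ratio A d f" "j \<le> d"
  shows "strict_mono_on {A<..} (\<lambda>x. f x / x ^ j)"
proof (rule strict_mono_onI)
  fix x y :: real
  assume "x \<in> {A<..}" "y \<in> {A<..}" "x < y"
  with assms have "0 < x"
    and *: "0 < f x / x ^ d" "f x / x ^ d < f y / y ^ d" "x ^ (d - j) \<le> y ^ (d - j)"
    by (auto dest: pos_strict_mono_ratioD intro: power_mono)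
  have "f x / x ^ j = (f x / x ^ d) * x ^ (d - j)"
    using \<open>0 < x\<close> assms(3) by (intro ratio_lower_power_eq) auto
  also have "\<dots> < (f y / y ^ d) * y ^ (d - j)"
    using * \<open>0 < x\<close> by (intro mult_less_le_imp_less) auto
  also have "\<dots> = f y / y ^ j"
    using \<open>0 < x\<close> \<open>x < y\<close> assms(3) by (intro ratio_lower_power_eq[symmetric]) auto
  finally show "f x / x ^ j < f y / y ^ j" .
qed

definition pos_mono_ratio_derivs :: "real \<Rightarrow> nat \<Rightarrow> real poly \<Rightarrow> bool" where
  "pos_mono_ratio_derivs A d p \<longleftrightarrow>
     pos_strict_mono_ratio A d (poly p) \<and>
     pos_mono_ratio A (d - 1) (poly (pderiv p)) \<and>
     pos_mono_ratio A (d - 2) (poly (pderiv (pderiv p)))"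

lemma pos_mono_ratio_derivs_even_factor:
  assumes "0 < b" "b \<le> A"
  shows "pos_mono_ratio_derivs A 2 [:- (b\<^sup>2), 0, 1:]"
proof -
  have "pos_mono_ratio A 1 (poly [:0, 2:])" "pos_mono_ratio A 0 (poly [:2:])"
    using assms by (auto simp: pos_mono_ratio_def intro: mono_onI)
  then show ?thesis
    using pos_strict_mono_ratio_even_factor[OF assms]
    by (simp add: pos_mono_ratio_derivs_def pderiv_pCons)
qed

lemma pderiv_pderiv_mult:
  "pderiv (pderiv (p * q)) = p * pderiv (pderiv q) + 2 * (pderiv p * pderiv q) + pderiv (pderiv p) * q"
  by (simp add: pderiv_mult pderiv_add algebra_simps mult_2_right)

lemma pos_mono_ratio_derivs_mult:
  assumes A: "0 \<le> A" and p: "pos_mono_ratio_derivs A d p" and q: "pos_mono_ratio_derivs A e q"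
    and "2 \<le> d" "2 \<le> e"
  shows "pos_mono_ratio_derivs A (d + e) (p * q)"
proof -
  have p0: "pos_strict_mono_ratio A d (poly p)" and p1: "pos_mono_ratio A (d - 1) (poly (pderiv p))"
    and p2: "pos_mono_ratio A (d - 2) (poly (pderiv (pderiv p)))"
    using p by (simp_all add: pos_mono_ratio_derivs_def)
  have q0: "pos_strict_mono_ratio A e (poly q)" and q1: "pos_mono_ratio A (e - 1) (poly (pderiv q))"
    and q2: "pos_mono_ratio A (e - 2) (poly (pderiv (pderiv q)))"
    using q by (simp_all add: pos_mono_ratio_derivs_def)
  have deg: "d + (e - 1) = d + e - 1" "d - 1 + e = d + e - 1"
    "d + (e - 2) = d + e - 2" "d - 1 + (e - 1) = d + e - 2" "d - 2 + e = d + e - 2"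
    using assms(4,5) by auto
  note mult = pos_mono_ratio_mult[OF A]
  note weak = pos_strict_mono_ratio_imp_pos_mono_ratio
  have "pos_strict_mono_ratio A (d + e) (\<lambda>x. poly p x * poly q x)"
    by (rule pos_strict_mono_ratio_mult[OF A p0 weak[OF q0]])
  moreover have "pos_mono_ratio A (d + e - 1)
    (\<lambda>x. poly p x * poly (pderiv q) x + poly (pderiv p) x * poly q x)"
    by (rule pos_mono_ratio_add[OF mult[OF weak[OF p0] q1, unfolded deg]
        mult[OF p1 weak[OF q0], unfolded deg]])
  moreover have "pos_mono_ratio A (d + e - 2)
    (\<lambda>x. poly p x * poly (pderiv (pderiv q)) x + 2 * (poly (pderiv p) x * poly (pderiv q) x)
         + poly (pderiv (pderiv p)) x * poly q x)"
    by (rule pos_mono_ratio_add[OF pos_mono_ratio_add[OF mult[OF weak[OF p0] q2, unfolded deg]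
        pos_mono_ratio_cmult[OF mult[OF p1 q1, unfolded deg]]] mult[OF p2 weak[OF q0], unfolded deg]]) simp
  moreover have "poly (p * q) = (\<lambda>x. poly p x * poly q x)"
    and "poly (pderiv (p * q)) = (\<lambda>x. poly p x * poly (pderiv q) x + poly (pderiv p) x * poly q x)"
    and "poly (pderiv (pderiv (p * q))) = (\<lambda>x. poly p x * poly (pderiv (pderiv q)) x
         + 2 * (poly (pderiv p) x * poly (pderiv q) x) + poly (pderiv (pderiv p)) x * poly q x)"
    by (simp_all only: pderiv_pderiv_mult) (simp_all add: fun_eq_iff pderiv_mult)
  ultimately show ?thesis
    unfolding pos_mono_ratio_derivs_def by simp
qed

lemma pos_mono_ratio_derivs_prod_even_factors:
  assumes "0 \<le> A" "finite I" "I \<noteq> {}" "\<And>i. i \<in> I \<Longrightarrow> 0 < b i \<and> b i \<le> A"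
  shows "pos_mono_ratio_derivs A (2 * card I) (\<Prod>i\<in>I. [:- ((b i)\<^sup>2), 0, 1:])"
  using assms(2-4)
proof (induction I rule: finite_ne_induct)
  case (singleton i)
  then show ?case by (simp add: pos_mono_ratio_derivs_even_factor)
next
  case (insert i I)
  have "pos_mono_ratio_derivs A (2 + 2 * card I)
      ([:- ((b i)\<^sup>2), 0, 1:] * (\<Prod>i\<in>I. [:- ((b i)\<^sup>2), 0, 1:]))"
    using insert by (intro pos_mono_ratio_derivs_mult \<open>0 \<le> A\<close> pos_mono_ratio_derivs_even_factor)
      (auto simp: Suc_le_eq card_gt_0_iff)
  then show ?case using insert by simp
qed

theorem lemmaB5:
  fixes a0 :: real and a :: "nat \<Rightarrow> real" and n :: nat
  defines "P \<equiv> evenP a0 a n"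
  assumes "n \<ge> 1" and "a0 \<noteq> 0" and "0 < a 1"
    and "\<And>i j. 1 \<le> i \<Longrightarrow> i \<le> j \<Longrightarrow> j \<le> n \<Longrightarrow> a i \<le> a j"
  shows "(a0 > 0 \<longrightarrow>
           (\<forall>j. j \<le> 2*n \<longrightarrow> (\<forall>x y. a n < x \<and> x < y \<longrightarrow> poly P x / x^j < poly P y / y^j)) \<and>
           (\<forall>j. j + 2 \<le> 2*n \<longrightarrow> (\<forall>x y. a n < x \<and> x < y \<longrightarrow> poly (pderiv P) x / x^j < poly (pderiv P) y / y^j)) \<and>
           (\<forall>j. j + 4 \<le> 2*n \<longrightarrow> (\<forall>x y. a n < x \<and> x < y \<longrightarrow> poly ((pderiv ^^ 2) P) x / x^j < poly ((pderiv ^^ 2) P) y / y^j)))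
       \<and> (a0 < 0 \<longrightarrow>
           (\<forall>j. j \<le> 2*n \<longrightarrow> (\<forall>x y. a n < x \<and> x < y \<longrightarrow> poly P x / x^j > poly P y / y^j)) \<and>
           (\<forall>j. j + 2 \<le> 2*n \<longrightarrow> (\<forall>x y. a n < x \<and> x < y \<longrightarrow> poly (pderiv P) x / x^j > poly (pderiv P) y / y^j)) \<and>
           (\<forall>j. j + 4 \<le> 2*n \<longrightarrow> (\<forall>x y. a n < x \<and> x < y \<longrightarrow> poly ((pderiv ^^ 2) P) x / x^j > poly ((pderiv ^^ 2) P) y / y^j)))"
proof -
  define Q where "Q = (\<Prod>i\<in>{1..n}. [:- ((a i)\<^sup>2), 0, 1:])"
  have P: "P = smult a0 Q" by (simp add: P_def Q_def evenP_def)
  have bounds: "0 < a i \<and> a i \<le> a n" if "i \<in> {1..n}" for i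
  proof -
    have "a 1 \<le> a i" "a i \<le> a n" using that assms(5) by auto
    then show ?thesis using assms(4) by linarith
  qed
  have A: "0 \<le> a n" using bounds[of n] assms(2) by fastforce
  have "pos_mono_ratio_derivs (a n) (2 * n) Q"
    using pos_mono_ratio_derivs_prod_even_factors[of "a n" "{1..n}" a] A bounds assms(2)
    by (simp add: Q_def)
  then have Q0: "pos_strict_mono_ratio (a n) (2 * n) (poly Q)"
    and Q1: "pos_mono_ratio (a n) (2 * n - 1) (poly (pderiv Q))"
    and Q2: "pos_mono_ratio (a n) (2 * n - 2) (poly (pderiv (pderiv Q)))"
    by (simp_all add: pos_mono_ratio_derivs_def)
  have "poly Q x / x ^ j < poly Q y / y ^ j" if "j \<le> 2 * n" "a n < x" "x < y" for j x y
    by (rule strict_mono_onD[OF pos_strict_mono_ratio_lower_power[OF A Q0 that(1)]]) (use that in auto)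
  moreover have "poly (pderiv Q) x / x ^ j < poly (pderiv Q) y / y ^ j"
    if "j + 2 \<le> 2 * n" "a n < x" "x < y" for j x y
    by (rule strict_mono_onD[OF pos_mono_ratio_lower_power[OF A Q1]]) (use that in auto)
  moreover have "poly (pderiv (pderiv Q)) x / x ^ j < poly (pderiv (pderiv Q)) y / y ^ j"
    if "j + 4 \<le> 2 * n" "a n < x" "x < y" for j x y
    by (rule strict_mono_onD[OF pos_mono_ratio_lower_power[OF A Q2]]) (use that in auto)
  ultimately show ?thesis
    by (simp add: P pderiv_smult numeral_2_eq_2 mult_less_cancel_left flip: times_divide_eq_right)
qed

end
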